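(* Let $(Sm(n))_{n\geqslant 0}$ be the sequence of Smarandache numbers, where $Sm(n)$ is the integer whose decimal expansion is the concatenation of $1,2,\ldots,n+1$ (so $Sm(0)=1$, $Sm(1)=12$, $Sm(2)=123$, $\ldots$). Let $l$ be a positive integer. Then for every integer $n\geqslant 0$ such that the integers $n+2$, $n+3$, $n+4$ (the numbers appended when passing from $Sm(n)$ to $Sm(n+3)$) all have exactly $l$ decimal digits, we have $$Sm(n+3) - (10^l+2)\, Sm(n+2) + (2\cdot 10^l + 1)\, Sm(n+1) - 10^l\, Sm(n) = 0.$$
   Context: For integers $a\geqslant 0$ and $b\geqslant 1$, the (decimal) concatenation of $a$ and $b$ is $a\cdot 10^{k}+b$, where $k$ is the number of decimal digits of $b$; so $Sm(n+1)=Sm(n)\cdot 10^{k}+(n+2)$ with $k$ the number of digits of $n+2$. *)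

theory Defs
  imports Main
begin

fun ndigits :: "nat \<Rightarrow> nat" where
  "ndigits n = (if n < 10 then 1 else Suc (ndigits (n div 10)))"

definition concat_dec :: "nat \<Rightarrow> nat \<Rightarrow> nat" where
  "concat_dec a b = a * 10 ^ ndigits b + b"

fun Sm :: "nat \<Rightarrow> nat" where
  "Sm 0 = 1"
| "Sm (Suc n) = concat_dec (Sm n) (n + 2)"

end

theory Submission
  imports Defs
begin

(* While the appended numbers all have l digits, Sm obeys x' = 10^l x + c with c increasing
   by 1 at each step; the first differences d of such a sequence satisfy d' = 10^l d + 1,
   so the second difference is 10^l times the previous one, which is the stated recurrence. *)

lemma Sm_Suc: "Sm (Suc n) = Sm n * 10 ^ ndigits (n + 2) + (n + 2)"
  by (simp add: concat_dec_def del: ndigits.simps)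

lemma affine_step_recurrence:
  fixes a c x0 x1 x2 x3 :: "'a :: comm_ring_1"
  assumes "x1 = a * x0 + c" and "x2 = a * x1 + (c + 1)" and "x3 = a * x2 + (c + 2)"
  shows "x3 - (a + 2) * x2 + (2 * a + 1) * x1 - a * x0 = 0"
  using assms by (simp add: algebra_simps)

theorem lemma1:
  fixes l n :: nat
  assumes "l > 0"
    and "ndigits (n + 2) = l" and "ndigits (n + 3) = l" and "ndigits (n + 4) = l"
  shows "int (Sm (n + 3)) - (10 ^ l + 2) * int (Sm (n + 2))
           + (2 * 10 ^ l + 1) * int (Sm (n + 1)) - 10 ^ l * int (Sm n) = 0"
proof (rule affine_step_recurrence)
  show "int (Sm (n + 1)) = 10 ^ l * int (Sm n) + int (n + 2)"
    using Sm_Suc [of n] assms(2) by (simp del: ndigits.simps)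
  show "int (Sm (n + 2)) = 10 ^ l * int (Sm (n + 1)) + (int (n + 2) + 1)"
    using Sm_Suc [of "n + 1"] assms(3) by (simp add: numeral_eq_Suc del: ndigits.simps)
  show "int (Sm (n + 3)) = 10 ^ l * int (Sm (n + 2)) + (int (n + 2) + 2)"
    using Sm_Suc [of "n + 2"] assms(4) by (simp add: numeral_eq_Suc del: ndigits.simps)
qed

end
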